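(* Let $\mathcal{X},\mathcal{A}$ be finite sets and $P_{A|X}$ a channel. There is a function $\varepsilon(n)\to0$ as $n\to\infty$ (depending only on $|\mathcal{X}|,|\mathcal{A}|$) such that for every $n$ and every list-decoding $(n,2^{nR},2^{nR_L},2^{-n\zeta})$-code for $P_{A|X}$, $$\zeta\ge\min_{Q_{XA}}\Big(D(Q_{A|X}\|P_{A|X}\mid Q_X)+\max\{R-R_L-I(X;A)_Q,\,0\}\Big)-\varepsilon(n),$$ the minimum being over probability distributions $Q_{XA}$ on $\mathcal{X}\times\mathcal{A}$.
   Context: Logarithms are base $2$; $[N]=\{0,\dots,N-1\}$; $P^{\times n}_{A|X}(a^n|x^n)=\prod_i P_{A|X}(a_i|x_i)$. A list-decoding $(n,2^{nR},L,\alpha)$-code consists of $\mathrm{Enc}\colon[2^{nR}]\to\mathcal{X}^n$ and a decoder assigning to each $a^n\in\mathcal{A}^n$ a subset $C_{a^n}\subseteq[2^{nR}]$ of size $L$, such that for all $m\in[2^{nR}]$, $\sum_{a^n: C_{a^n}\ni m}P^{\times n}_{A|X}(a^n|\mathrm{Enc}(m))\ge\alpha$. $I(X;A)_Q=H(X)_Q+H(A)_Q-H(X,A)_Q$; $D(Q_{A|X}\|P_{A|X}\mid Q_X)=\sum_x Q_X(x)\sum_a Q_{A|X}(a|x)\log\frac{Q_{A|X}(a|x)}{P_{A|X}(a|x)}$. *)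

theory Defs
  imports "HOL-Analysis.Analysis"
begin

definition channel :: "('x::finite \<Rightarrow> 'a::finite \<Rightarrow> real) \<Rightarrow> bool" where
  "channel P \<longleftrightarrow> (\<forall>x a. 0 \<le> P x a) \<and> (\<forall>x. (\<Sum>a\<in>UNIV. P x a) = 1)"

definition joint_dist :: "('x::finite \<Rightarrow> 'a::finite \<Rightarrow> real) \<Rightarrow> bool" where
  "joint_dist Q \<longleftrightarrow> (\<forall>x a. 0 \<le> Q x a) \<and> (\<Sum>x\<in>UNIV. \<Sum>a\<in>UNIV. Q x a) = 1"

definition marg_X :: "('x::finite \<Rightarrow> 'a::finite \<Rightarrow> real) \<Rightarrow> 'x \<Rightarrow> real" where
  "marg_X Q x = (\<Sum>a\<in>UNIV. Q x a)"

definition marg_A :: "('x::finite \<Rightarrow> 'a::finite \<Rightarrow> real) \<Rightarrow> 'a \<Rightarrow> real" where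
  "marg_A Q a = (\<Sum>x\<in>UNIV. Q x a)"

definition entropy2 :: "('b::finite \<Rightarrow> real) \<Rightarrow> real" where
  "entropy2 p = - (\<Sum>s\<in>UNIV. if p s = 0 then 0 else p s * log 2 (p s))"

definition mutual_info :: "('x::finite \<Rightarrow> 'a::finite \<Rightarrow> real) \<Rightarrow> real" where
  "mutual_info Q = entropy2 (marg_X Q) + entropy2 (marg_A Q) - entropy2 (\<lambda>(x, a). Q x a)"

text \<open>Conditional divergence D(Q_{A|X} || P_{A|X} | Q_X), with the conventions
  0 log(0/q) = 0 and c log(c/0) = +infinity for c > 0; terms with Q_X(x) = 0 contribute 0.\<close>
definition cond_div :: "('x::finite \<Rightarrow> 'a::finite \<Rightarrow> real) \<Rightarrow> ('x \<Rightarrow> 'a \<Rightarrow> real) \<Rightarrow> ereal" where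
  "cond_div Q P = (\<Sum>x\<in>UNIV. \<Sum>a\<in>UNIV.
     (let qx = marg_X Q x; qc = Q x a / qx in
      if qx = 0 \<or> qc = 0 then 0
      else if P x a = 0 then \<infinity>
      else ereal (qx * (qc * log 2 (qc / P x a)))))"

text \<open>List-decoding (n, M, L, alpha)-code: messages are {0..<M}; codewords and channel
  outputs are lists of length n.\<close>
definition list_code :: "('x::finite \<Rightarrow> 'a::finite \<Rightarrow> real) \<Rightarrow> nat \<Rightarrow> nat \<Rightarrow> nat \<Rightarrow> real
    \<Rightarrow> (nat \<Rightarrow> 'x list) \<Rightarrow> ('a list \<Rightarrow> nat set) \<Rightarrow> bool" where
  "list_code P n M L \<alpha> enc dec \<longleftrightarrow>
     (\<forall>m<M. length (enc m) = n) \<and>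
     (\<forall>as. length as = n \<longrightarrow> dec as \<subseteq> {..<M} \<and> card (dec as) = L) \<and>
     (\<forall>m<M. \<alpha> \<le> (\<Sum>as\<in>{as. length as = n \<and> m \<in> dec as}. \<Prod>i<n. P (enc m ! i) (as ! i)))"

end

(* Method of types.  Sort the pairs (m, a^n) with m in the decoded list of a^n by the joint
   type V of (Enc m, a^n); there are at most (n+1)^(|X||A|) types.  Every pair of type V has
   channel probability 2^(-n (D(V_A|X || P | V_X) + H_V(A|X))), and there are at most
   min (M 2^(n H_V(A|X)), L 2^(n H_V(A))) such pairs: per message, its conditional type class;
   per output sequence of type V_A, the L messages of its list.  So type V carries probability
   at most M 2^(-n (D + max (R - R_L - I_V(X;A)) 0)), and comparing the sum over all types with
   the success probability M 2^(-n zeta) gives the bound with eps n = |X||A| log (n+1) / n. *)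

theory Submission
  imports Defs "HOL-Real_Asymp.Real_Asymp"
begin

lemma prod_comp_eq_prod_power_card:
  fixes g :: "'i \<Rightarrow> 'b::finite" and h :: "'b \<Rightarrow> 'c::comm_monoid_mult"
  assumes "finite I"
  shows "(\<Prod>i\<in>I. h (g i)) = (\<Prod>y\<in>UNIV. h y ^ card {i\<in>I. g i = y})"
proof -
  have "(\<Prod>i\<in>I. h (g i)) = (\<Prod>y\<in>UNIV. \<Prod>i\<in>{i\<in>I. g i = y}. h (g i))"
    using prod.group[of I UNIV g "\<lambda>i. h (g i)"] assms by simp
  also have "\<dots> = (\<Prod>y\<in>UNIV. h y ^ card {i\<in>I. g i = y})"
    by (rule prod.cong) (auto intro: prod.cong)
  finally show ?thesis .
qed

lemma sum_card_fibres:
  fixes g :: "'i \<Rightarrow> 'b::finite"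
  assumes "finite I"
  shows "(\<Sum>y\<in>UNIV. card {i\<in>I. g i = y}) = card I"
  using sum.group[of I UNIV g "\<lambda>i. 1::nat"] assms by simp

lemma sum_UNIV_pair:
  "(\<Sum>s\<in>(UNIV::('x::finite \<times> 'a::finite) set). f s) = (\<Sum>x\<in>UNIV. \<Sum>a\<in>UNIV. f (x, a))"
  by (simp add: sum.cartesian_product)

lemma finite_lists_length_UNIV: "finite {as :: 'a::finite list. length as = n}"
  using finite_lists_length_eq[of "UNIV :: 'a set" n] by simp

lemma sum_lists_length_prod:
  fixes f :: "nat \<Rightarrow> 'a::finite \<Rightarrow> 'b::comm_semiring_1"
  shows "(\<Sum>as\<in>{as. length as = n}. \<Prod>i<n. f i (as ! i)) = (\<Prod>i<n. \<Sum>a\<in>UNIV. f i a)"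
proof (induction n arbitrary: f)
  case 0
  then show ?case by simp
next
  case (Suc n)
  have lists_Suc: "{as::'a list. length as = Suc n} = (\<lambda>(a, as). a # as) ` (UNIV \<times> {as. length as = n})"
    by (auto simp: length_Suc_conv image_iff)
  have inj: "inj_on (\<lambda>(a, as). a # (as::'a list)) (UNIV \<times> {as. length as = n})"
    by (auto simp: inj_on_def)
  have "(\<Sum>as\<in>{as. length as = Suc n}. \<Prod>i<Suc n. f i (as ! i))
      = (\<Sum>a\<in>UNIV. \<Sum>as\<in>{as. length as = n}. f 0 a * (\<Prod>i<n. f (Suc i) (as ! i)))"
    unfolding lists_Suc sum.reindex[OF inj]
    by (simp add: sum.cartesian_product prod.lessThan_Suc_shift case_prod_unfold del: prod.lessThan_Suc)
  also have "\<dots> = (\<Sum>a\<in>UNIV. f 0 a * (\<Prod>i<n. \<Sum>b\<in>UNIV. f (Suc i) b))"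
    using Suc.IH[of "\<lambda>i. f (Suc i)"] by (simp add: sum_distrib_left[symmetric])
  also have "\<dots> = (\<Prod>i<Suc n. \<Sum>a\<in>UNIV. f i a)"
    by (simp add: prod.lessThan_Suc_shift sum_distrib_right del: prod.lessThan_Suc)
  finally show ?case .
qed

lemma card_mult_const_product_prob_le_1:
  fixes f :: "nat \<Rightarrow> 'a::finite \<Rightarrow> real"
  assumes nonneg: "\<And>i a. i < n \<Longrightarrow> 0 \<le> f i a"
    and sum_1: "\<And>i. i < n \<Longrightarrow> (\<Sum>a\<in>UNIV. f i a) = 1"
    and C: "C \<subseteq> {as. length as = n}"
    and const: "\<And>as. as \<in> C \<Longrightarrow> (\<Prod>i<n. f i (as ! i)) = c"
  shows "real (card C) * c \<le> 1"
proof -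
  have "real (card C) * c = (\<Sum>as\<in>C. \<Prod>i<n. f i (as ! i))"
    using const by simp
  also have "\<dots> \<le> (\<Sum>as\<in>{as. length as = n}. \<Prod>i<n. f i (as ! i))"
    using C by (intro sum_mono2 finite_lists_length_UNIV) (auto intro!: prod_nonneg nonneg)
  also have "\<dots> = 1"
    using sum_1 by (simp add: sum_lists_length_prod)
  finally show ?thesis .
qed

lemma powr_real_mult_log:
  assumes "0 < b" "b \<noteq> 1" "0 < x"
  shows "b powr (real k * log b x) = x ^ k"
proof -
  have "x ^ k = (b powr log b x) powr real k"
    using assms by (simp add: powr_realpow)
  then show ?thesis
    by (simp add: powr_powr mult.commute)
qed

lemma prod_power_eq_powr_sum_log:
  fixes W :: "'b::finite \<Rightarrow> real" and N :: "'b \<Rightarrow> nat"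
  assumes "\<And>s. N s > 0 \<Longrightarrow> W s > 0"
  shows "(\<Prod>s\<in>UNIV. W s ^ N s) = 2 powr (\<Sum>s\<in>UNIV. real (N s) * log 2 (W s))"
proof -
  have "W s ^ N s = 2 powr (real (N s) * log 2 (W s))" for s
    using assms[of s] powr_real_mult_log[of 2 "W s" "N s"] by (cases "N s = 0") auto
  then show ?thesis
    by (simp add: powr_sum)
qed

lemma real_mult_entropy2_counts:
  fixes K :: "'b::finite \<Rightarrow> nat"
  assumes "n > 0"
  shows "real n * entropy2 (\<lambda>s. real (K s) / real n)
    = - (\<Sum>s\<in>UNIV. real (K s) * log 2 (real (K s) / real n))"
  unfolding entropy2_def using assms by (auto simp: sum_distrib_left sum_negf intro!: sum.cong)

lemma card_functions_with_sum_le: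
  "card {N :: 's::finite \<Rightarrow> nat. (\<Sum>s\<in>UNIV. N s) = n} \<le> (n + 1) ^ CARD('s)"
  and finite_functions_with_sum: "finite {N :: 's::finite \<Rightarrow> nat. (\<Sum>s\<in>UNIV. N s) = n}"
proof -
  have sub: "{N :: 's \<Rightarrow> nat. (\<Sum>s\<in>UNIV. N s) = n} \<subseteq> PiE UNIV (\<lambda>_. {..n})"
    by (auto simp: PiE_UNIV_domain intro: member_le_sum[of _ UNIV N for N, simplified])
  show "finite {N :: 's \<Rightarrow> nat. (\<Sum>s\<in>UNIV. N s) = n}"
    by (rule finite_subset[OF sub]) (simp add: finite_PiE)
  then show "card {N :: 's \<Rightarrow> nat. (\<Sum>s\<in>UNIV. N s) = n} \<le> (n + 1) ^ CARD('s)"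
    using card_mono[OF _ sub] by (simp add: finite_PiE card_PiE)
qed

section \<open>Joint types\<close>

definition joint_type :: "nat \<Rightarrow> 'x list \<Rightarrow> 'a list \<Rightarrow> 'x \<times> 'a \<Rightarrow> nat" where
  "joint_type n xs as s = card {i\<in>{..<n}. (xs ! i, as ! i) = s}"

definition type_marg_X :: "('x::finite \<times> 'a::finite \<Rightarrow> nat) \<Rightarrow> 'x \<Rightarrow> nat" where
  "type_marg_X N x = (\<Sum>a\<in>UNIV. N (x, a))"

definition type_marg_A :: "('x::finite \<times> 'a::finite \<Rightarrow> nat) \<Rightarrow> 'a \<Rightarrow> nat" where
  "type_marg_A N a = (\<Sum>x\<in>UNIV. N (x, a))"

definition empirical_dist :: "nat \<Rightarrow> ('x \<times> 'a \<Rightarrow> nat) \<Rightarrow> 'x \<Rightarrow> 'a \<Rightarrow> real" where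
  "empirical_dist n N x a = real (N (x, a)) / real n"

text \<open>For \<open>n = (\<Sum>s. N s)\<close> this is \<open>n H(A|X)\<close> of \<^term>\<open>empirical_dist n N\<close>.\<close>
definition cond_entropy_count :: "('x::finite \<times> 'a::finite \<Rightarrow> nat) \<Rightarrow> real" where
  "cond_entropy_count N = - (\<Sum>s\<in>UNIV. real (N s) * log 2 (real (N s) / real (type_marg_X N (fst s))))"

text \<open>\<open>log\<^sub>2 P\<^sup>n(a\<^sup>n | x\<^sup>n)\<close> for every pair of sequences of joint type \<open>N\<close>.\<close>
definition log_prob_of_type :: "('x \<Rightarrow> 'a \<Rightarrow> real) \<Rightarrow> ('x::finite \<times> 'a::finite \<Rightarrow> nat) \<Rightarrow> real" where
  "log_prob_of_type P N = (\<Sum>s\<in>UNIV. real (N s) * log 2 (case_prod P s))"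

lemma sum_joint_type: "(\<Sum>s\<in>UNIV. joint_type n (xs :: 'x::finite list) (as :: 'a::finite list) s) = n"
  unfolding joint_type_def using sum_card_fibres[of "{..<n}" "\<lambda>i. (xs ! i, as ! i)"] by simp

lemma joint_type_pos: "i < n \<Longrightarrow> 0 < joint_type n xs as (xs ! i, as ! i)"
  unfolding joint_type_def by (subst card_gt_0_iff) auto

lemma le_type_marg_X: "N (x, a) \<le> type_marg_X N x"
  unfolding type_marg_X_def by (rule member_le_sum) auto

lemma type_marg_X_pos: "0 < N (x, a) \<Longrightarrow> 0 < type_marg_X N x"
  using le_type_marg_X[of N x a] by simp

lemma sum_type_marg_A: "(\<Sum>a\<in>UNIV. type_marg_A N a) = (\<Sum>s\<in>UNIV. N s)"
  unfolding type_marg_A_def sum_UNIV_pair by (rule sum.swap)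

lemma card_positions_eq_type_marg_A:
  "card {i\<in>{..<n}. as ! i = a} = type_marg_A (joint_type n (xs :: 'x::finite list) (as :: 'a::finite list)) a"
proof -
  have "type_marg_A (joint_type n xs as) a = (\<Sum>x\<in>UNIV. card {i\<in>{i\<in>{..<n}. as ! i = a}. xs ! i = x})"
    unfolding type_marg_A_def joint_type_def by (intro sum.cong refl arg_cong[where f = card]) auto
  also have "\<dots> = card {i\<in>{..<n}. as ! i = a}"
    by (rule sum_card_fibres) simp
  finally show ?thesis by simp
qed

lemma prod_eq_prod_power_joint_type:
  "(\<Prod>i<n. P (xs ! i) (as ! i)) = (\<Prod>s\<in>UNIV. case_prod P s ^ joint_type n xs (as :: 'a::finite list) s)"
  for xs :: "'x::finite list"
  unfolding joint_type_def
  using prod_comp_eq_prod_power_card[where I = "{..<n}" and g = "\<lambda>i. (xs ! i, as ! i)" and h = "case_prod P"]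
  by simp

lemma card_cond_type_class_le:
  fixes xs :: "'x::finite list" and N :: "'x \<times> 'a::finite \<Rightarrow> nat"
  shows "real (card {as :: 'a list. length as = n \<and> joint_type n xs as = N}) \<le> 2 powr cond_entropy_count N"
proof (cases "{as :: 'a list. length as = n \<and> joint_type n xs as = N} = {}")
  case True
  then show ?thesis
    by (simp only: card.empty) simp
next
  case False
  then obtain as0 where as0: "length as0 = n" "joint_type n xs as0 = N" by auto
  define W where "W s = real (N s) / real (type_marg_X N (fst s))" for s
  have marg_pos: "0 < type_marg_X N (xs ! i)" if "i < n" for i
    using joint_type_pos[OF that, of xs as0] as0(2) type_marg_X_pos by metis
  have "real (card {as. length as = n \<and> joint_type n xs as = N}) * 2 powr (- cond_entropy_count N) \<le> 1"
  proof (rule card_mult_const_product_prob_le_1[where f = "\<lambda>i a. W (xs ! i, a)"])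
    show "(\<Sum>a\<in>UNIV. W (xs ! i, a)) = 1" if "i < n" for i
    proof -
      have "(\<Sum>a\<in>UNIV. W (xs ! i, a)) = (\<Sum>a\<in>UNIV. real (N (xs ! i, a))) / real (type_marg_X N (xs ! i))"
        by (simp add: W_def sum_divide_distrib)
      also have "(\<Sum>a\<in>UNIV. real (N (xs ! i, a))) = real (type_marg_X N (xs ! i))"
        by (simp add: type_marg_X_def)
      finally show ?thesis
        using marg_pos[OF that] by simp
    qed
    fix as assume "as \<in> {as. length as = n \<and> joint_type n xs as = N}"
    then have "(\<Prod>i<n. W (xs ! i, as ! i)) = (\<Prod>s\<in>UNIV. W s ^ N s)"
      using prod_eq_prod_power_joint_type[where P = "\<lambda>x a. W (x, a)"] by simp
    also have "\<dots> = 2 powr (- cond_entropy_count N)"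
      unfolding cond_entropy_count_def W_def minus_minus
      by (rule prod_power_eq_powr_sum_log) (auto simp: zero_less_divide_iff intro: type_marg_X_pos)
    finally show "(\<Prod>i<n. W (xs ! i, as ! i)) = 2 powr (- cond_entropy_count N)" .
  qed (auto simp: W_def)
  then show ?thesis
    by (simp add: powr_minus field_simps)
qed

lemma card_type_class_le:
  fixes K :: "'a::finite \<Rightarrow> nat"
  assumes n: "0 < n" and K: "(\<Sum>a\<in>UNIV. K a) = n"
  shows "real (card {as :: 'a list. length as = n \<and> (\<forall>a. card {i\<in>{..<n}. as ! i = a} = K a)})
    \<le> 2 powr (real n * entropy2 (\<lambda>a. real (K a) / real n))"
proof -
  let ?T = "{as :: 'a list. length as = n \<and> (\<forall>a. card {i\<in>{..<n}. as ! i = a} = K a)}"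
  have "real (card ?T) * 2 powr (- (real n * entropy2 (\<lambda>a. real (K a) / real n))) \<le> 1"
  proof (rule card_mult_const_product_prob_le_1[where f = "\<lambda>i a. real (K a) / real n"])
    show "(\<Sum>a\<in>UNIV. real (K a) / real n) = 1"
      using n K by (simp add: sum_divide_distrib[symmetric] of_nat_sum[symmetric] del: of_nat_sum)
    fix as assume "as \<in> ?T"
    then have "(\<Prod>i<n. real (K (as ! i)) / real n) = (\<Prod>a\<in>UNIV. (real (K a) / real n) ^ K a)"
      using prod_comp_eq_prod_power_card[where I = "{..<n}" and g = "\<lambda>i. as ! i" and h = "\<lambda>a. real (K a) / real n"]
      by simp
    also have "\<dots> = 2 powr (- (real n * entropy2 (\<lambda>a. real (K a) / real n)))"
      unfolding real_mult_entropy2_counts[OF n] minus_minus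
      by (rule prod_power_eq_powr_sum_log) (use n in simp)
    finally show "(\<Prod>i<n. real (K (as ! i)) / real n)
        = 2 powr (- (real n * entropy2 (\<lambda>a. real (K a) / real n)))" .
  qed auto
  then show ?thesis
    by (simp add: powr_minus field_simps)
qed

section \<open>Information quantities of a joint type\<close>

lemma marg_X_empirical_dist: "marg_X (empirical_dist n N) = (\<lambda>x. real (type_marg_X N x) / real n)"
  unfolding marg_X_def type_marg_X_def empirical_dist_def by (simp add: sum_divide_distrib)

lemma marg_A_empirical_dist: "marg_A (empirical_dist n N) = (\<lambda>a. real (type_marg_A N a) / real n)"
  unfolding marg_A_def type_marg_A_def empirical_dist_def by (simp add: sum_divide_distrib)

lemma joint_dist_empirical_dist:
  assumes "0 < n" "(\<Sum>s\<in>UNIV. N s) = n"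
  shows "joint_dist (empirical_dist n N)"
proof -
  have "(\<Sum>x\<in>UNIV. \<Sum>a\<in>UNIV. empirical_dist n N x a) = real (\<Sum>s\<in>UNIV. N s) / real n"
    using sum_UNIV_pair[of "\<lambda>s. real (N s) / real n"]
    by (simp add: empirical_dist_def sum_divide_distrib)
  then show ?thesis
    using assms by (simp add: joint_dist_def empirical_dist_def)
qed

lemma cond_div_empirical_dist:
  fixes N :: "'x::finite \<times> 'a::finite \<Rightarrow> nat" and P :: "'x \<Rightarrow> 'a \<Rightarrow> real"
  assumes n: "0 < n" and supp: "\<And>x a. 0 < N (x, a) \<Longrightarrow> 0 < P x a"
  shows "cond_div (empirical_dist n N) P
    = ereal (- (cond_entropy_count N + log_prob_of_type P N) / real n)"
proof -
  let ?t = "\<lambda>x a. real (N (x, a)) * (log 2 (real (N (x, a)) / real (type_marg_X N x)) - log 2 (P x a))"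
  have summand: "(let qx = marg_X (empirical_dist n N) x; qc = empirical_dist n N x a / qx in
      if qx = 0 \<or> qc = 0 then 0
      else if P x a = 0 then \<infinity>
      else ereal (qx * (qc * log 2 (qc / P x a))))
    = ereal (?t x a / real n)" for x a
  proof (cases "N (x, a) = 0")
    case False
    with n supp[of x a] type_marg_X_pos[of N x a] show ?thesis
      by (simp add: Let_def marg_X_empirical_dist empirical_dist_def log_divide_pos log_mult_pos)
  qed (simp add: empirical_dist_def)
  have "(\<Sum>x\<in>UNIV. \<Sum>a\<in>UNIV. ?t x a) = - (cond_entropy_count N + log_prob_of_type P N)"
    unfolding cond_entropy_count_def log_prob_of_type_def sum_UNIV_pair
    by (simp add: right_diff_distrib sum_subtractf)
  then show ?thesis
    unfolding cond_div_def summand sum_ereal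
    by (simp add: sum_divide_distrib[symmetric])
qed

lemma mutual_info_empirical_dist:
  fixes N :: "'x::finite \<times> 'a::finite \<Rightarrow> nat"
  assumes n: "0 < n"
  shows "real n * mutual_info (empirical_dist n N)
    = real n * entropy2 (\<lambda>a. real (type_marg_A N a) / real n) - cond_entropy_count N"
proof -
  have split_log: "real (N s) * log 2 (real (N s) / real (type_marg_X N (fst s)))
      = real (N s) * log 2 (real (N s) / real n) - real (N s) * log 2 (real (type_marg_X N (fst s)) / real n)" for s
  proof (cases "N s = 0")
    case False
    with n type_marg_X_pos[of N "fst s" "snd s"] show ?thesis
      by (simp add: log_divide_pos right_diff_distrib)
  qed simp
  have regroup: "(\<Sum>s\<in>UNIV. real (N s) * log 2 (real (type_marg_X N (fst s)) / real n))
      = (\<Sum>x\<in>UNIV. real (type_marg_X N x) * log 2 (real (type_marg_X N x) / real n))"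
    unfolding sum_UNIV_pair type_marg_X_def by (simp add: sum_distrib_right)
  have joint: "(\<lambda>(x, a). empirical_dist n N x a) = (\<lambda>s. real (N s) / real n)"
    by (auto simp: empirical_dist_def)
  show ?thesis
    unfolding mutual_info_def marg_X_empirical_dist marg_A_empirical_dist joint
      distrib_left right_diff_distrib real_mult_entropy2_counts[OF n]
      cond_entropy_count_def split_log sum_subtractf regroup
    by simp
qed

section \<open>Type classes of a list code\<close>

definition decoded_pairs :: "nat \<Rightarrow> nat \<Rightarrow> ('a list \<Rightarrow> nat set) \<Rightarrow> (nat \<times> 'a list) set" where
  "decoded_pairs n M dec = Sigma {..<M} (\<lambda>m. {as. length as = n \<and> m \<in> dec as})"

definition decoded_type_class ::
    "nat \<Rightarrow> nat \<Rightarrow> (nat \<Rightarrow> 'x list) \<Rightarrow> ('a list \<Rightarrow> nat set) \<Rightarrow> ('x \<times> 'a \<Rightarrow> nat) \<Rightarrow> (nat \<times> 'a list) set" where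
  "decoded_type_class n M enc dec N = {(m, as) \<in> decoded_pairs n M dec. joint_type n (enc m) as = N}"

lemma finite_decoded_pairs: "finite (decoded_pairs n M (dec :: 'a::finite list \<Rightarrow> nat set))"
  unfolding decoded_pairs_def
  by (intro finite_SigmaI finite_subset[OF _ finite_lists_length_UNIV[of n]]) auto

lemma list_code_success_le_sum:
  assumes "list_code P n M L \<alpha> enc dec"
  shows "real M * \<alpha> \<le> (\<Sum>(m, as)\<in>decoded_pairs n M dec. \<Prod>i<n. P (enc m ! i) (as ! i))"
proof -
  have "real M * \<alpha> = (\<Sum>m<M. \<alpha>)"
    by simp
  also have "\<dots> \<le> (\<Sum>m<M. \<Sum>as\<in>{as. length as = n \<and> m \<in> dec as}. \<Prod>i<n. P (enc m ! i) (as ! i))"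
    using assms by (intro sum_mono) (auto simp: list_code_def)
  also have "\<dots> = (\<Sum>(m, as)\<in>decoded_pairs n M dec. \<Prod>i<n. P (enc m ! i) (as ! i))"
    unfolding decoded_pairs_def
    by (rule sum.Sigma) (auto intro: finite_subset[OF _ finite_lists_length_UNIV[of n]])
  finally show ?thesis .
qed

lemma sum_decoded_pairs_by_type:
  fixes enc :: "nat \<Rightarrow> 'x::finite list" and dec :: "'a::finite list \<Rightarrow> nat set"
  shows "(\<Sum>p\<in>decoded_pairs n M dec. f p)
    = (\<Sum>N\<in>{N :: 'x \<times> 'a \<Rightarrow> nat. (\<Sum>s\<in>UNIV. N s) = n}. \<Sum>p\<in>decoded_type_class n M enc dec N. f p)"
proof -
  have "(\<lambda>(m, as). joint_type n (enc m) as) ` decoded_pairs n M dec \<subseteq> {N. (\<Sum>s\<in>UNIV. N s) = n}"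
    using sum_joint_type by auto
  from sum.group[OF finite_decoded_pairs finite_functions_with_sum this, of f]
  show ?thesis
    unfolding decoded_type_class_def by (simp add: case_prod_unfold)
qed

lemma sum_decoded_type_class_prob:
  fixes enc :: "nat \<Rightarrow> 'x::finite list" and dec :: "'a::finite list \<Rightarrow> nat set"
  shows "(\<Sum>(m, as)\<in>decoded_type_class n M enc dec N. \<Prod>i<n. P (enc m ! i) (as ! i))
    = real (card (decoded_type_class n M enc dec N)) * (\<Prod>s\<in>UNIV. case_prod P s ^ N s)"
proof -
  have "(\<Prod>i<n. P (enc m ! i) (as ! i)) = (\<Prod>s\<in>UNIV. case_prod P s ^ N s)"
    if "(m, as) \<in> decoded_type_class n M enc dec N" for m as
    using that by (simp add: decoded_type_class_def prod_eq_prod_power_joint_type)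
  then show ?thesis
    by (simp add: case_prod_unfold)
qed

lemma card_decoded_type_class_le_messages:
  fixes enc :: "nat \<Rightarrow> 'x::finite list" and dec :: "'a::finite list \<Rightarrow> nat set"
  shows "real (card (decoded_type_class n M enc dec N)) \<le> real M * 2 powr cond_entropy_count N"
proof -
  define T where "T m = {as :: 'a list. length as = n \<and> joint_type n (enc m) as = N}" for m
  have fin_T: "finite (T m)" for m
    unfolding T_def by (rule finite_subset[OF _ finite_lists_length_UNIV[of n]]) auto
  have "decoded_type_class n M enc dec N \<subseteq> Sigma {..<M} T"
    unfolding decoded_type_class_def decoded_pairs_def T_def by auto
  then have "card (decoded_type_class n M enc dec N) \<le> (\<Sum>m<M. card (T m))"
    using card_mono[of "Sigma {..<M} T"] fin_T by (simp add: card_SigmaI)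
  also have "real (\<Sum>m<M. card (T m)) \<le> (\<Sum>m<M. 2 powr cond_entropy_count N)"
    unfolding of_nat_sum T_def by (intro sum_mono card_cond_type_class_le)
  finally show ?thesis
    by simp
qed

lemma card_decoded_type_class_le_list_size:
  fixes enc :: "nat \<Rightarrow> 'x::finite list" and dec :: "'a::finite list \<Rightarrow> nat set"
  assumes code: "list_code P n M L \<alpha> enc dec" and n: "0 < n" and N: "(\<Sum>s\<in>UNIV. N s) = n"
  shows "real (card (decoded_type_class n M enc dec N))
    \<le> real L * 2 powr (real n * entropy2 (\<lambda>a. real (type_marg_A N a) / real n))"
proof -
  define T where "T = {as :: 'a list. length as = n \<and> (\<forall>a. card {i\<in>{..<n}. as ! i = a} = type_marg_A N a)}"
  have fin_T: "finite T"
    unfolding T_def by (rule finite_subset[OF _ finite_lists_length_UNIV[of n]]) auto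
  have dec: "\<And>as. length as = n \<Longrightarrow> dec as \<subseteq> {..<M} \<and> card (dec as) = L"
    using code by (simp add: list_code_def)
  have "(m, as) \<in> prod.swap ` Sigma T dec" if "(m, as) \<in> decoded_type_class n M enc dec N" for m as
  proof -
    from that have "length as = n" "m \<in> dec as" "joint_type n (enc m) as = N"
      by (auto simp: decoded_type_class_def decoded_pairs_def)
    then have "as \<in> T"
      unfolding T_def using card_positions_eq_type_marg_A[where xs = "enc m" and as = as] by auto
    with \<open>m \<in> dec as\<close> show ?thesis
      by force
  qed
  moreover have "finite (Sigma T dec)"
    using fin_T dec by (intro finite_SigmaI) (auto simp: T_def intro: finite_subset)
  ultimately have "card (decoded_type_class n M enc dec N) \<le> card (prod.swap ` Sigma T dec)"
    by (intro card_mono finite_imageI) auto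
  also have "\<dots> = card (Sigma T dec)"
    by (simp add: card_image)
  also have "\<dots> = (\<Sum>as\<in>T. card (dec as))"
    using fin_T dec by (intro card_SigmaI) (auto simp: T_def intro: finite_subset)
  also have "\<dots> = card T * L"
    using dec by (simp add: T_def)
  finally have "real (card (decoded_type_class n M enc dec N)) \<le> real (card T) * real L"
    by (simp flip: of_nat_mult)
  also have "\<dots> \<le> 2 powr (real n * entropy2 (\<lambda>a. real (type_marg_A N a) / real n)) * real L"
    unfolding T_def using N by (intro mult_right_mono card_type_class_le n) (simp_all add: sum_type_marg_A)
  finally show ?thesis
    by (simp add: mult.commute)
qed

lemma exponent_of_two_counting_bounds:
  fixes n R RL h u lp D I :: real
  assumes by_messages: "c \<le> 2 powr (n * R) * 2 powr h"
    and by_lists: "c \<le> 2 powr (n * RL) * 2 powr u"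
    and D: "n * D = - (h + lp)" and I: "n * I = u - h"
  shows "c * 2 powr lp \<le> 2 powr (n * R) * 2 powr (- (n * (D + max (R - RL - I) 0)))"
proof (cases "R - RL - I \<le> 0")
  case True
  have "c * 2 powr lp \<le> 2 powr (n * R) * 2 powr h * 2 powr lp"
    using by_messages by (rule mult_right_mono) simp
  also have "\<dots> = 2 powr (n * R) * 2 powr (- (n * D))"
    using D by (simp add: powr_add[symmetric] ac_simps)
  finally show ?thesis
    using True by simp
next
  case False
  have "c * 2 powr lp \<le> 2 powr (n * RL) * 2 powr u * 2 powr lp"
    using by_lists by (rule mult_right_mono) simp
  also have "\<dots> = 2 powr (n * R) * 2 powr (- (n * (D + (R - RL - I))))"
  proof -
    have "n * RL + u + lp = n * R + - (n * (D + (R - RL - I)))"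
      using D I unfolding distrib_left right_diff_distrib by linarith
    then show ?thesis
      by (simp only: powr_add[symmetric])
  qed
  finally show ?thesis
    using False by simp
qed

lemma decoded_type_class_prob_le:
  fixes P :: "'x::finite \<Rightarrow> 'a::finite \<Rightarrow> real"
  assumes chan: "channel P" and code: "list_code P n M L \<alpha> enc dec" and n: "0 < n"
    and M: "real M = 2 powr (real n * R)" and L: "real L = 2 powr (real n * RL)"
    and N: "(\<Sum>s\<in>UNIV. N s) = n"
    and t: "ereal t \<le> cond_div (empirical_dist n N) P
                      + ereal (max (R - RL - mutual_info (empirical_dist n N)) 0)"
  shows "(\<Sum>(m, as)\<in>decoded_type_class n M enc dec N. \<Prod>i<n. P (enc m ! i) (as ! i))
    \<le> real M * 2 powr (- (real n * t))"
proof (cases "\<exists>x a. 0 < N (x, a) \<and> P x a = 0")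
  case True
  then have zero: "(\<Prod>s\<in>UNIV. case_prod P s ^ N s) = 0"
    by (auto intro: prod_zero)
  show ?thesis
    unfolding sum_decoded_type_class_prob zero by simp
next
  case False
  then have supp: "\<And>x a. 0 < N (x, a) \<Longrightarrow> 0 < P x a"
    using chan by (force simp: channel_def order_le_less)
  define D where "D = - (cond_entropy_count N + log_prob_of_type P N) / real n"
  define I where "I = mutual_info (empirical_dist n N)"
  have "ereal t \<le> ereal (D + max (R - RL - I) 0)"
    using t by (simp only: cond_div_empirical_dist[OF n supp] D_def I_def plus_ereal.simps)
  then have t_le: "- (real n * (D + max (R - RL - I) 0)) \<le> - (real n * t)"
    using n by (simp add: mult_left_mono)
  have "(\<Sum>(m, as)\<in>decoded_type_class n M enc dec N. \<Prod>i<n. P (enc m ! i) (as ! i))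
      = real (card (decoded_type_class n M enc dec N)) * 2 powr log_prob_of_type P N"
    unfolding sum_decoded_type_class_prob log_prob_of_type_def
    by (subst prod_power_eq_powr_sum_log) (use supp in auto)
  also have "\<dots> \<le> real M * 2 powr (- (real n * (D + max (R - RL - I) 0)))"
    unfolding M
  proof (rule exponent_of_two_counting_bounds)
    show "real n * D = - (cond_entropy_count N + log_prob_of_type P N)"
      using n by (simp add: D_def)
    show "real n * I = real n * entropy2 (\<lambda>a. real (type_marg_A N a) / real n) - cond_entropy_count N"
      unfolding I_def by (rule mutual_info_empirical_dist[OF n])
    show "real (card (decoded_type_class n M enc dec N)) \<le> 2 powr (real n * R) * 2 powr cond_entropy_count N"
      using card_decoded_type_class_le_messages[of n M enc dec N] unfolding M .
    show "real (card (decoded_type_class n M enc dec N))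
        \<le> 2 powr (real n * RL) * 2 powr (real n * entropy2 (\<lambda>a. real (type_marg_A N a) / real n))"
      using card_decoded_type_class_le_list_size[OF code n N] unfolding L .
  qed
  also have "\<dots> \<le> real M * 2 powr (- (real n * t))"
    using t_le by (intro mult_left_mono) simp_all
  finally show ?thesis .
qed

lemma list_code_exponent_le:
  fixes P :: "'x::finite \<Rightarrow> 'a::finite \<Rightarrow> real"
  assumes chan: "channel P" and n: "1 \<le> n"
    and M: "real M = 2 powr (real n * R)" and L: "real L = 2 powr (real n * RL)"
    and code: "list_code P n M L (2 powr (- (real n * \<zeta>))) enc dec"
    and t: "ereal t \<le> (INF Q\<in>{Q. joint_dist Q}. cond_div Q P + ereal (max (R - RL - mutual_info Q) 0))"
  shows "t \<le> \<zeta> + real CARD('x \<times> 'a) * log 2 (real n + 1) / real n"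
proof -
  let ?types = "{N :: 'x \<times> 'a \<Rightarrow> nat. (\<Sum>s\<in>UNIV. N s) = n}"
  have "real M * 2 powr (- (real n * \<zeta>))
      \<le> (\<Sum>N\<in>?types. \<Sum>(m, as)\<in>decoded_type_class n M enc dec N. \<Prod>i<n. P (enc m ! i) (as ! i))"
    using list_code_success_le_sum[OF code] by (simp add: sum_decoded_pairs_by_type[where enc = enc])
  also have "\<dots> \<le> (\<Sum>N\<in>?types. real M * 2 powr (- (real n * t)))"
  proof (rule sum_mono)
    fix N assume "N \<in> ?types"
    then have N: "(\<Sum>s\<in>UNIV. N s) = n" by simp
    then have "joint_dist (empirical_dist n N)"
      using n by (intro joint_dist_empirical_dist) simp_all
    then have "ereal t \<le> cond_div (empirical_dist n N) P
        + ereal (max (R - RL - mutual_info (empirical_dist n N)) 0)"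
      using t by (blast intro: order_trans INF_lower)
    then show "(\<Sum>(m, as)\<in>decoded_type_class n M enc dec N. \<Prod>i<n. P (enc m ! i) (as ! i))
        \<le> real M * 2 powr (- (real n * t))"
      using decoded_type_class_prob_le[OF chan code _ M L N] n by simp
  qed
  also have "\<dots> \<le> (real n + 1) ^ CARD('x \<times> 'a) * (real M * 2 powr (- (real n * t)))"
  proof -
    have "real (card ?types) \<le> (real n + 1) ^ CARD('x \<times> 'a)"
      using card_functions_with_sum_le[where 's = "'x \<times> 'a" and n = n]
      by (metis of_nat_1 of_nat_add of_nat_le_iff of_nat_power)
    then show ?thesis
      by (simp add: mult_right_mono)
  qed
  also have "\<dots> = real M * 2 powr (real CARD('x \<times> 'a) * log 2 (real n + 1) - real n * t)"
  proof -
    have "(real n + 1) ^ CARD('x \<times> 'a) = 2 powr (real CARD('x \<times> 'a) * log 2 (real n + 1))"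
      by (rule powr_real_mult_log[symmetric]) simp_all
    then show ?thesis
      unfolding diff_conv_add_uminus powr_add by (simp only: mult.left_commute)
  qed
  finally have "2 powr (- (real n * \<zeta>)) \<le> 2 powr (real CARD('x \<times> 'a) * log 2 (real n + 1) - real n * t)"
    using M by simp
  then show ?thesis
    using n by (simp add: field_simps)
qed

theorem mainTheorem5:
  shows "\<exists>\<epsilon> :: nat \<Rightarrow> real. \<epsilon> \<longlonglongrightarrow> 0 \<and>
    (\<forall>P :: 'x::finite \<Rightarrow> 'a::finite \<Rightarrow> real. channel P \<longrightarrow>
      (\<forall>(n::nat) (M::nat) (L::nat) (R::real) (RL::real) (\<zeta>::real)
          (enc :: nat \<Rightarrow> 'x list) (dec :: 'a list \<Rightarrow> nat set).
        1 \<le> n \<and> real M = 2 powr (real n * R) \<and> real L = 2 powr (real n * RL) \<and>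
        list_code P n M L (2 powr (- (real n * \<zeta>))) enc dec \<longrightarrow>
        (INF Q\<in>{Q. joint_dist Q}. cond_div Q P + ereal (max (R - RL - mutual_info Q) 0))
          - ereal (\<epsilon> n) \<le> ereal \<zeta>))"
proof (intro exI conjI allI impI)
  show "(\<lambda>n. real CARD('x \<times> 'a) * log 2 (real n + 1) / real n) \<longlonglongrightarrow> 0"
    by real_asymp
next
  fix P :: "'x \<Rightarrow> 'a \<Rightarrow> real" and n M L R RL \<zeta> enc dec
  assume chan: "channel P"
    and code: "1 \<le> n \<and> real M = 2 powr (real n * R) \<and> real L = 2 powr (real n * RL) \<and>
      list_code P n M L (2 powr (- (real n * \<zeta>))) enc dec"
  let ?exponent = "INF Q\<in>{Q. joint_dist Q}. cond_div Q P + ereal (max (R - RL - mutual_info Q) 0)"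
  let ?\<epsilon> = "real CARD('x \<times> 'a) * log 2 (real n + 1) / real n"
  have "?exponent \<le> ereal (\<zeta> + ?\<epsilon>)"
  proof (rule dense_le)
    fix y assume "y < ?exponent"
    then show "y \<le> ereal (\<zeta> + ?\<epsilon>)"
      using list_code_exponent_le[OF chan] code by (cases y) auto
  qed
  then show "?exponent - ereal ?\<epsilon> \<le> ereal \<zeta>"
    by (cases ?exponent) auto
qed

end
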